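(* Let $\lambda_{\min}>0$ and define $$t^*=\min_{k=0,1,\dots,K}\frac{1-\lambda_{\min}\,\mathbf{G}_{k,:}\mathbf{C}^{-1}\mathbf{F}\mathbf{1}}{\mathbf{G}_{k,:}\mathbf{C}^{-1}\tilde{\mathbf{h}}}.$$ If $t^*\ge 0$, then $t^*$ is the optimal value of problem (P). If $t^*<0$, then (P) is infeasible (the network cannot support per-UE arrival rate $\lambda_{\min}$).
   Context: Consider a rooted tree whose root is the donor (vertex $0$), whose other internal vertices are IAB nodes $1,\dots,K$, and whose leaves are $M$ user equipments (UEs); vertices $0,\dots,K$ are called base stations (BSs), and every BS has at least one child. Every non-root vertex $v$ has a unique parent, and the edge from its parent to $v$ is indexed by $v$; let $\mathcal{E}$ be the set of edges. For each UE $m$, $\mathsf{R}(m)$ is the set of edges on the path from $0$ to $m$, and $h_m=|\mathsf{R}(m)|$. The routing matrix $\mathbf{F}\in\{0,1\}^{|\mathcal{E}|\times M}$ has $F_{v,m}=1$ iff $v\in\mathsf{R}(m)$. Let $\mathbf{C}=\mathrm{diag}(c_v)_{v\in\mathcal{E}}$ with all $c_v>0$. Let $\mathbf{G}\in\{0,1\}^{(K+1)\times|\mathcal{E}|}$ (rows indexed by BSs $0,\dots,K$) be a scheduling matrix in which every row and every column contains at least one $1$ (e.g. the half-duplex matrix $\mathbf{G}_{\mathrm{HD}}$ with $[\mathbf{G}_{\mathrm{HD}}]_{k,v}=1$ iff BS $k$ is the parent or the child of edge $v$, or the full-duplex matrix $\mathbf{G}_{\mathrm{FD}}$ with $[\mathbf{G}_{\mathrm{FD}}]_{k,v}=1$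 iff BS $k$ is the parent of edge $v$). $\mathbf{G}_{k,:}$ denotes the row of $\mathbf{G}$ for BS $k$; $\mathbf{1}$ denotes the all-ones vector. The vector $\tilde{\mathbf{h}}\in\mathbb{R}^{|\mathcal{E}|}$ is defined by $\tilde h_v=\max\{h_m: v\in\mathsf{R}(m)\}$. Problem (P): maximize $t$ over $(t,\boldsymbol{\lambda},\boldsymbol{\mu})\in\mathbb{R}\times\mathbb{R}^M\times\mathbb{R}^{|\mathcal{E}|}$ subject to $\boldsymbol{\lambda}\ge\lambda_{\min}\mathbf{1}$, $\mathbf{0}\le\boldsymbol{\mu}\le\mathbf{1}$, $t\ge0$, $\mathbf{G}\boldsymbol{\mu}\le\mathbf{1}$ (all componentwise), and $c_v\mu_v-(\mathbf{F}\boldsymbol{\lambda})_v\ge t\,h_m$ for every UE $m$ and every edge $v\in\mathsf{R}(m)$. *)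

theory Defs
  imports Main "HOL-Library.FuncSet" Complex_Main
begin

text \<open>Vertex labelling convention: BSs are 0..K (0 = donor), UEs are K+1..K+M.
  The tree is given by a parent map p; the edge from p v to v is indexed by v,
  so the edge set is {1..K+M}.\<close>

definition BSs :: "nat \<Rightarrow> nat set" where "BSs K = {0..K}"
definition UEs :: "nat \<Rightarrow> nat \<Rightarrow> nat set" where "UEs K M = {K+1..K+M}"
definition edges :: "nat \<Rightarrow> nat \<Rightarrow> nat set" where "edges K M = {1..K+M}"

definition is_IAB_tree :: "nat \<Rightarrow> nat \<Rightarrow> (nat \<Rightarrow> nat) \<Rightarrow> bool" where
  "is_IAB_tree K M p \<longleftrightarrow>
     (\<forall>v\<in>edges K M. p v \<in> BSs K) \<and>
     (\<forall>v\<in>{0..K+M}. \<exists>n. (p ^^ n) v = 0) \<and>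
     (\<forall>k\<in>BSs K. \<exists>v\<in>edges K M. p v = k)"

definition hopdist :: "(nat \<Rightarrow> nat) \<Rightarrow> nat \<Rightarrow> nat" where
  "hopdist p m = (LEAST n. (p ^^ n) m = 0)"

definition route :: "(nat \<Rightarrow> nat) \<Rightarrow> nat \<Rightarrow> nat set" where
  "route p m = {(p ^^ i) m | i. i < hopdist p m}"

definition hcnt :: "(nat \<Rightarrow> nat) \<Rightarrow> nat \<Rightarrow> real" where
  "hcnt p m = real (card (route p m))"

definition Fmat :: "(nat \<Rightarrow> nat) \<Rightarrow> nat \<Rightarrow> nat \<Rightarrow> real" where
  "Fmat p v m = (if v \<in> route p m then 1 else 0)"

definition Fmul :: "nat \<Rightarrow> nat \<Rightarrow> (nat \<Rightarrow> nat) \<Rightarrow> (nat \<Rightarrow> real) \<Rightarrow> nat \<Rightarrow> real" where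
  "Fmul K M p lam v = (\<Sum>m\<in>UEs K M. Fmat p v m * lam m)"

definition htilde :: "nat \<Rightarrow> nat \<Rightarrow> (nat \<Rightarrow> nat) \<Rightarrow> nat \<Rightarrow> real" where
  "htilde K M p v = Max {hcnt p m | m. m \<in> UEs K M \<and> v \<in> route p m}"

text \<open>Feasibility for problem (P); G k v is the (k,v) entry of the scheduling matrix,
  c v the diagonal entry of C.\<close>
definition feasibleP ::
  "nat \<Rightarrow> nat \<Rightarrow> (nat \<Rightarrow> nat) \<Rightarrow> (nat \<Rightarrow> real) \<Rightarrow> (nat \<Rightarrow> nat \<Rightarrow> real) \<Rightarrow> real
   \<Rightarrow> real \<Rightarrow> (nat \<Rightarrow> real) \<Rightarrow> (nat \<Rightarrow> real) \<Rightarrow> bool" where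
  "feasibleP K M p c G lmin t lam mu \<longleftrightarrow>
     (\<forall>m\<in>UEs K M. lam m \<ge> lmin) \<and>
     (\<forall>v\<in>edges K M. 0 \<le> mu v \<and> mu v \<le> 1) \<and>
     t \<ge> 0 \<and>
     (\<forall>k\<in>BSs K. (\<Sum>v\<in>edges K M. G k v * mu v) \<le> 1) \<and>
     (\<forall>m\<in>UEs K M. \<forall>v\<in>route p m. c v * mu v - Fmul K M p lam v \<ge> t * hcnt p m)"

definition tstar ::
  "nat \<Rightarrow> nat \<Rightarrow> (nat \<Rightarrow> nat) \<Rightarrow> (nat \<Rightarrow> real) \<Rightarrow> (nat \<Rightarrow> nat \<Rightarrow> real) \<Rightarrow> real \<Rightarrow> real" where
  "tstar K M p c G lmin =
     Min ((\<lambda>k. (1 - lmin * (\<Sum>v\<in>edges K M. G k v * (1 / c v) * Fmul K M p (\<lambda>_. 1) v))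
              / (\<Sum>v\<in>edges K M. G k v * (1 / c v) * htilde K M p v)) ` BSs K)"

end

theory Submission
  imports Defs
begin

text \<open>Every edge v lies on the route of some UE, and \<open>htilde v\<close> is the hop count of one of
  them, so the constraints of (P) at v amount to
  \<open>c v * mu v \<ge> (F lam) v + t * htilde v \<ge> lmin * (F 1) v + t * htilde v\<close>.
  Hence every feasible \<open>mu\<close> dominates the tight airtime \<open>C\<^sup>-\<^sup>1 (lmin F 1 + t htilde)\<close>,
  and row k of \<open>G mu \<le> 1\<close> bounds t by the k-th ratio in \<open>t*\<close>. Conversely, for \<open>t* \<ge> 0\<close>
  the rates \<open>lmin\<close> with the tight airtime at \<open>t*\<close> meet every row of \<open>G mu \<le> 1\<close>, and
  \<open>mu \<le> 1\<close> because every column of G contains a 1.\<close>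

lemma hopdist_parent:
  assumes "(p ^^ n) x = 0" and "x \<noteq> 0"
  shows "hopdist p x = Suc (hopdist p (p x))"
  unfolding hopdist_def
  using Least_Suc[of "\<lambda>n. (p ^^ n) x = 0" n] assms by (simp add: funpow_swap1)

lemma route_eq_image: "route p x = (\<lambda>i. (p ^^ i) x) ` {..<hopdist p x}"
  unfolding route_def by auto

lemma finite_route: "finite (route p x)"
  unfolding route_eq_image by simp

lemma route_parent:
  assumes "(p ^^ n) x = 0" and "x \<noteq> 0"
  shows "route p x = insert x (route p (p x))"
proof -
  have "route p x = (\<lambda>i. (p ^^ i) x) ` {..<Suc (hopdist p (p x))}"
    unfolding hopdist_parent[OF assms, symmetric] route_eq_image ..
  also have "\<dots> = insert x (route p (p x))"
    unfolding route_eq_image lessThan_Suc_eq_insert_0 image_insert image_image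
    by (simp add: funpow_Suc_right del: funpow.simps)
  finally show ?thesis .
qed

lemma route_root: "route p 0 = {}"
  unfolding route_def hopdist_def by simp

lemma tree_reaches_root:
  assumes "is_IAB_tree K M p" and "x \<le> K + M"
  shows "\<exists>n. (p ^^ n) x = 0"
  using assms unfolding is_IAB_tree_def by auto

lemma route_subset_edges:
  assumes tree: "is_IAB_tree K M p" and "x \<le> K + M"
  shows "route p x \<subseteq> edges K M"
  using assms(2)
proof (induction "hopdist p x" arbitrary: x rule: less_induct)
  case less
  show ?case
  proof (cases "x = 0")
    case True
    then show ?thesis by (simp add: route_root)
  next
    case False
    obtain n where n: "(p ^^ n) x = 0" using tree_reaches_root[OF tree less.prems] ..
    have x: "x \<in> edges K M" using False less.prems by (simp add: edges_def)
    then have "p x \<le> K + M" using tree by (auto simp: is_IAB_tree_def BSs_def)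
    then have "route p (p x) \<subseteq> edges K M"
      using less.hyps hopdist_parent[OF n False] by simp
    with x show ?thesis using route_parent[OF n False] by simp
  qed
qed

lemma self_in_route:
  assumes tree: "is_IAB_tree K M p" and "x \<in> edges K M"
  shows "x \<in> route p x"
  using assms tree_reaches_root[OF tree, of x]
  by (auto simp: edges_def route_parent)

lemma one_le_hcnt:
  assumes tree: "is_IAB_tree K M p" and m: "m \<in> UEs K M"
  shows "1 \<le> hcnt p m"
proof -
  have "m \<in> edges K M" using m by (auto simp: UEs_def edges_def)
  then have "route p m \<noteq> {}" using self_in_route[OF tree] by blast
  then show ?thesis
    unfolding hcnt_def using finite_route[of p m] by (simp add: Suc_le_eq card_gt_0_iff)
qed

text \<open>A descendant of v of maximal depth cannot be a BS, since a child of a BS is one hop deeper.\<close>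

lemma edge_on_route_of_UE:
  assumes tree: "is_IAB_tree K M p" and v: "v \<in> edges K M"
  shows "\<exists>m\<in>UEs K M. v \<in> route p m"
proof -
  define D where "D = {x \<in> edges K M. v \<in> route p x}"
  have "finite D" "v \<in> D"
    using v self_in_route[OF tree v] by (auto simp: D_def edges_def)
  then obtain w where w: "w \<in> D" and deepest: "\<And>x. x \<in> D \<Longrightarrow> hopdist p x \<le> hopdist p w"
    using Max_in[of "hopdist p ` D"] Max_ge[of "hopdist p ` D"] by fastforce
  have "w \<in> UEs K M"
  proof (rule ccontr)
    assume "w \<notin> UEs K M"
    then have "w \<in> BSs K" using w by (auto simp: D_def edges_def UEs_def BSs_def)
    then obtain x where x: "x \<in> edges K M" "p x = w"
      using tree unfolding is_IAB_tree_def by blast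
    obtain n where n: "(p ^^ n) x = 0" using tree_reaches_root[OF tree] x by (auto simp: edges_def)
    have "x \<noteq> 0" using x by (simp add: edges_def)
    then have "x \<in> D" "hopdist p x = Suc (hopdist p w)"
      using x w route_parent[OF n] hopdist_parent[OF n] by (auto simp: D_def)
    with deepest show False by fastforce
  qed
  with w show ?thesis by (auto simp: D_def)
qed

lemma hcnt_le_htilde:
  assumes "m \<in> UEs K M" and "v \<in> route p m"
  shows "hcnt p m \<le> htilde K M p v"
proof -
  have "finite {hcnt p m | m. m \<in> UEs K M \<and> v \<in> route p m}"
    by (simp add: UEs_def)
  with assms show ?thesis unfolding htilde_def by (intro Max_ge) auto
qed

lemma htilde_attained:
  assumes tree: "is_IAB_tree K M p" and v: "v \<in> edges K M"
  shows "\<exists>m\<in>UEs K M. v \<in> route p m \<and> htilde K M p v = hcnt p m"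
proof -
  let ?S = "{hcnt p m | m. m \<in> UEs K M \<and> v \<in> route p m}"
  have "finite ?S" by (simp add: UEs_def)
  moreover have "?S \<noteq> {}" using edge_on_route_of_UE[OF tree v] by blast
  ultimately have "Max ?S \<in> ?S" by (rule Max_in)
  then show ?thesis unfolding htilde_def by auto
qed

lemma one_le_htilde:
  assumes "is_IAB_tree K M p" and "v \<in> edges K M"
  shows "1 \<le> htilde K M p v"
  using htilde_attained[OF assms] one_le_hcnt[OF assms(1)] by fastforce

lemma Fmul_const: "Fmul K M p (\<lambda>_. a) v = a * Fmul K M p (\<lambda>_. 1) v"
  unfolding Fmul_def sum_distrib_left by (simp add: mult.commute)

lemma Fmul_ge_const:
  assumes "\<forall>m\<in>UEs K M. a \<le> lam m"
  shows "a * Fmul K M p (\<lambda>_. 1) v \<le> Fmul K M p lam v"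
  unfolding Fmul_def sum_distrib_left using assms by (intro sum_mono) (auto simp: Fmat_def)

lemma Fmul_one_nonneg: "0 \<le> Fmul K M p (\<lambda>_. 1) v"
  unfolding Fmul_def by (intro sum_nonneg) (auto simp: Fmat_def)

locale IAB_schedule =
  fixes K M :: nat and p :: "nat \<Rightarrow> nat" and c :: "nat \<Rightarrow> real" and G :: "nat \<Rightarrow> nat \<Rightarrow> real"
  assumes tree: "is_IAB_tree K M p"
    and c_pos: "v \<in> edges K M \<Longrightarrow> 0 < c v"
    and G_nonneg: "k \<in> BSs K \<Longrightarrow> v \<in> edges K M \<Longrightarrow> 0 \<le> G k v"
    and G_row: "k \<in> BSs K \<Longrightarrow> \<exists>v\<in>edges K M. 0 < G k v"
    and G_col: "v \<in> edges K M \<Longrightarrow> \<exists>k\<in>BSs K. 1 \<le> G k v"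
begin

definition rate_load :: "nat \<Rightarrow> real" where
  "rate_load k = (\<Sum>v\<in>edges K M. G k v * (1 / c v) * Fmul K M p (\<lambda>_. 1) v)"

definition hop_load :: "nat \<Rightarrow> real" where
  "hop_load k = (\<Sum>v\<in>edges K M. G k v * (1 / c v) * htilde K M p v)"

definition tight_airtime :: "real \<Rightarrow> real \<Rightarrow> nat \<Rightarrow> real" where
  "tight_airtime lmin t v = (lmin * Fmul K M p (\<lambda>_. 1) v + t * htilde K M p v) / c v"

lemma tstar_eq_Min:
  "tstar K M p c G lmin = Min ((\<lambda>k. (1 - lmin * rate_load k) / hop_load k) ` BSs K)"
  unfolding tstar_def rate_load_def hop_load_def ..

lemma hop_load_pos:
  assumes k: "k \<in> BSs K"
  shows "0 < hop_load k"
proof -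
  obtain v where v: "v \<in> edges K M" "0 < G k v" using G_row[OF k] ..
  have terms_nonneg: "0 \<le> G k w * (1 / c w) * htilde K M p w" if "w \<in> edges K M" for w
    using G_nonneg[OF k that] c_pos[OF that] one_le_htilde[OF tree that] by simp
  have "0 < G k v * (1 / c v) * htilde K M p v"
    using v c_pos[OF v(1)] one_le_htilde[OF tree v(1)] by simp
  also have "\<dots> \<le> hop_load k"
    unfolding hop_load_def using v terms_nonneg
    by (intro member_le_sum) (auto simp: edges_def)
  finally show ?thesis .
qed

lemma load_tight_airtime:
  "(\<Sum>v\<in>edges K M. G k v * tight_airtime lmin t v) = lmin * rate_load k + t * hop_load k"
  unfolding tight_airtime_def rate_load_def hop_load_def sum_distrib_left sum.distrib[symmetric]
  by (intro sum.cong) (auto simp: field_simps add_divide_distrib)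

lemma tight_airtime_le:
  assumes f: "feasibleP K M p c G lmin t lam mu" and v: "v \<in> edges K M"
  shows "tight_airtime lmin t v \<le> mu v"
proof -
  obtain m where m: "m \<in> UEs K M" "v \<in> route p m" "htilde K M p v = hcnt p m"
    using htilde_attained[OF tree v] by blast
  have "t * hcnt p m \<le> c v * mu v - Fmul K M p lam v"
    using f m unfolding feasibleP_def by auto
  moreover have "lmin * Fmul K M p (\<lambda>_. 1) v \<le> Fmul K M p lam v"
    using f Fmul_ge_const unfolding feasibleP_def by blast
  ultimately show ?thesis
    unfolding tight_airtime_def using c_pos[OF v] m(3) by (simp add: divide_le_eq mult.commute)
qed

lemma feasibleP_le_tstar:
  assumes f: "feasibleP K M p c G lmin t lam mu"
  shows "t \<le> tstar K M p c G lmin"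
proof -
  have "t \<le> (1 - lmin * rate_load k) / hop_load k" if k: "k \<in> BSs K" for k
  proof -
    have "lmin * rate_load k + t * hop_load k \<le> (\<Sum>v\<in>edges K M. G k v * mu v)"
      unfolding load_tight_airtime[symmetric]
      using tight_airtime_le[OF f] G_nonneg[OF k] by (intro sum_mono mult_left_mono) auto
    also have "\<dots> \<le> 1" using f k unfolding feasibleP_def by auto
    finally show ?thesis using hop_load_pos[OF k] by (simp add: le_divide_eq)
  qed
  then show ?thesis unfolding tstar_eq_Min by (simp add: BSs_def)
qed

lemma feasibleP_tstar:
  assumes lmin: "0 \<le> lmin" and T: "0 \<le> tstar K M p c G lmin"
  shows "feasibleP K M p c G lmin (tstar K M p c G lmin) (\<lambda>_. lmin)
           (tight_airtime lmin (tstar K M p c G lmin))"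
proof -
  define T where "T = tstar K M p c G lmin"
  define mu where "mu = tight_airtime lmin T"
  have mu_nonneg: "0 \<le> mu v" if "v \<in> edges K M" for v
    unfolding mu_def tight_airtime_def T_def
    using lmin T c_pos[OF that] one_le_htilde[OF tree that] Fmul_one_nonneg[of K M p v] by simp
  have row: "(\<Sum>v\<in>edges K M. G k v * mu v) \<le> 1" if k: "k \<in> BSs K" for k
  proof -
    have "T \<le> (1 - lmin * rate_load k) / hop_load k"
      unfolding T_def tstar_eq_Min using k by (intro Min_le) (auto simp: BSs_def)
    then show ?thesis
      unfolding mu_def load_tight_airtime using hop_load_pos[OF k] by (simp add: le_divide_eq)
  qed
  have mu_le_1: "mu v \<le> 1" if v: "v \<in> edges K M" for v
  proof -
    obtain k where k: "k \<in> BSs K" "1 \<le> G k v" using G_col[OF v] ..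
    have "mu v \<le> G k v * mu v" using k mu_nonneg[OF v] by (simp add: mult_le_cancel_right1)
    also have "\<dots> \<le> (\<Sum>w\<in>edges K M. G k w * mu w)"
      using v G_nonneg[OF k(1)] mu_nonneg by (intro member_le_sum) (auto simp: edges_def)
    also have "\<dots> \<le> 1" by (rule row[OF k(1)])
    finally show ?thesis .
  qed
  have route_constraint: "T * hcnt p m \<le> c v * mu v - Fmul K M p (\<lambda>_. lmin) v"
    if m: "m \<in> UEs K M" and v: "v \<in> route p m" for m v
  proof -
    have "v \<in> edges K M" using route_subset_edges[OF tree] m v by (auto simp: UEs_def)
    then have "c v * mu v - Fmul K M p (\<lambda>_. lmin) v = T * htilde K M p v"
      unfolding mu_def tight_airtime_def Fmul_const[of K M p lmin] using c_pos[of v] by simp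
    moreover have "T * hcnt p m \<le> T * htilde K M p v"
      using hcnt_le_htilde[OF m v] T unfolding T_def by (rule mult_left_mono)
    ultimately show ?thesis by simp
  qed
  show ?thesis
    unfolding feasibleP_def T_def[symmetric] mu_def[symmetric]
    using T[folded T_def] mu_nonneg mu_le_1 row route_constraint by auto
qed

end

theorem theorem1:
  fixes K M :: nat and p :: "nat \<Rightarrow> nat" and c :: "nat \<Rightarrow> real"
    and G :: "nat \<Rightarrow> nat \<Rightarrow> real" and lmin :: real
  assumes tree: "is_IAB_tree K M p"
    and cpos: "\<forall>v\<in>edges K M. c v > 0"
    and G01: "\<forall>k\<in>BSs K. \<forall>v\<in>edges K M. G k v = 0 \<or> G k v = 1"
    and Grow: "\<forall>k\<in>BSs K. \<exists>v\<in>edges K M. G k v = 1"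
    and Gcol: "\<forall>v\<in>edges K M. \<exists>k\<in>BSs K. G k v = 1"
    and lmin_pos: "lmin > 0"
  shows "(tstar K M p c G lmin \<ge> 0 \<longrightarrow>
            (\<exists>lam mu. feasibleP K M p c G lmin (tstar K M p c G lmin) lam mu) \<and>
            (\<forall>t lam mu. feasibleP K M p c G lmin t lam mu \<longrightarrow> t \<le> tstar K M p c G lmin))
       \<and> (tstar K M p c G lmin < 0 \<longrightarrow>
            \<not> (\<exists>t lam mu. feasibleP K M p c G lmin t lam mu))"
proof -
  interpret IAB_schedule K M p c G
  proof
    show "\<And>k v. k \<in> BSs K \<Longrightarrow> v \<in> edges K M \<Longrightarrow> 0 \<le> G k v" using G01 by force
    show "\<And>k. k \<in> BSs K \<Longrightarrow> \<exists>v\<in>edges K M. 0 < G k v" using Grow by force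
    show "\<And>v. v \<in> edges K M \<Longrightarrow> \<exists>k\<in>BSs K. 1 \<le> G k v" using Gcol by force
  qed (use tree cpos in auto)
  have "\<exists>lam mu. feasibleP K M p c G lmin (tstar K M p c G lmin) lam mu"
    if "0 \<le> tstar K M p c G lmin"
    using feasibleP_tstar[OF _ that] lmin_pos by fastforce
  moreover have "\<not> (\<exists>t lam mu. feasibleP K M p c G lmin t lam mu)"
    if "tstar K M p c G lmin < 0"
  proof
    assume "\<exists>t lam mu. feasibleP K M p c G lmin t lam mu"
    then obtain t lam mu where f: "feasibleP K M p c G lmin t lam mu" by blast
    then have "0 \<le> t" unfolding feasibleP_def by simp
    with feasibleP_le_tstar[OF f] that show False by simp
  qed
  ultimately show ?thesis using feasibleP_le_tstar by blast
qed

end
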